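(* Let $G$ be a graph on $t>1000$ vertices. For $i\in\{2,3\}$ let $e_i$ be the number of edges of $G$ of weight $i$, and let $\bar{e}$ be the number of edges of the complement of $G$. If $\bar{e}\le t^2/4$, then $w(G)=2^{e_2}3^{e_3}\le 2^{\binom{t}{2}}2^{-0.16\bar{e}}$. If $\bar{e}>t^2/4$, then $w(G)<3^{t^2/4}$.
   Context: For a graph $G$, give each edge weight $2$ if it belongs to some triangle of $G$ and weight $3$ otherwise; $w(G)$ is the product of the weights of all edges of $G$. *)

theory Defs
  imports Complex_Main
begin

definition simple_graph :: "'a set \<Rightarrow> 'a set set \<Rightarrow> bool" where
  "simple_graph V E \<longleftrightarrow> finite V \<and> (\<forall>e\<in>E. e \<subseteq> V \<and> card e = 2)"

definition in_triangle :: "'a set \<Rightarrow> 'a set set \<Rightarrow> 'a set \<Rightarrow> bool" where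
  "in_triangle V E e \<longleftrightarrow> (\<exists>u v z. e = {u, v} \<and> z \<in> V \<and> {u, z} \<in> E \<and> {v, z} \<in> E)"

definition edge_weight :: "'a set \<Rightarrow> 'a set set \<Rightarrow> 'a set \<Rightarrow> nat" where
  "edge_weight V E e = (if in_triangle V E e then 2 else 3)"

definition graph_weight :: "'a set \<Rightarrow> 'a set set \<Rightarrow> nat" where
  "graph_weight V E = (\<Prod>e\<in>E. edge_weight V E e)"

definition num_edges_weight :: "'a set \<Rightarrow> 'a set set \<Rightarrow> nat \<Rightarrow> nat" where
  "num_edges_weight V E i = card {e\<in>E. edge_weight V E e = i}"

definition complement_edges :: "'a set \<Rightarrow> 'a set set \<Rightarrow> 'a set set" where
  "complement_edges V E = {e. e \<subseteq> V \<and> card e = 2 \<and> e \<notin> E}"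

end

theory Submission
  imports Defs
begin

text \<open>
  The endpoints of an edge xy lying in no triangle have disjoint neighbourhoods, so between them
  they have at least t - 2 non-neighbours. Charging the non-neighbours of each vertex x evenly to
  the h(x) non-triangle edges at x, every non-triangle edge receives at least 2 - 4/t, while the
  total charge is the number 2 e-bar of non-adjacent ordered pairs. Hence e3 (1 - 2/t) \<le> e-bar,
  so w(G) = 2^(e2+e3) (3/2)^e3 loses a factor 2^(0.16 e-bar) against 2^(t choose 2).
  If e-bar > t^2/4, simply w(G) \<le> 3^|E| with |E| < t^2/4.
\<close>

definition non_triangle_edges :: "'a set \<Rightarrow> 'a set set \<Rightarrow> 'a set set" where
  "non_triangle_edges V E = {e\<in>E. \<not> in_triangle V E e}"

definition nbrs :: "'a set \<Rightarrow> 'a set set \<Rightarrow> 'a \<Rightarrow> 'a set" where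
  "nbrs V E x = {z\<in>V. {x, z} \<in> E}"

definition non_nbrs :: "'a set \<Rightarrow> 'a set set \<Rightarrow> 'a \<Rightarrow> 'a set" where
  "non_nbrs V E x = {z\<in>V. z \<noteq> x \<and> {x, z} \<notin> E}"

definition non_triangle_nbrs :: "'a set \<Rightarrow> 'a set set \<Rightarrow> 'a \<Rightarrow> 'a set" where
  "non_triangle_nbrs V E x = {z\<in>V. {x, z} \<in> non_triangle_edges V E}"

lemma simple_graph_edgeD:
  assumes "simple_graph V E" "{x, y} \<in> E"
  shows "x \<in> V \<and> y \<in> V \<and> x \<noteq> y"
proof -
  have "{x, y} \<subseteq> V" "card {x, y} = 2"
    using assms unfolding simple_graph_def by auto
  then show ?thesis by (cases "x = y") auto
qed

lemma simple_graph_finite_edges: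
  assumes "simple_graph V E"
  shows "finite E"
proof -
  have "E \<subseteq> Pow V" using assms unfolding simple_graph_def by auto
  then show ?thesis using assms finite_subset unfolding simple_graph_def by blast
qed

lemma num_edges_weight_3:
  "num_edges_weight V E 3 = card (non_triangle_edges V E)"
  unfolding num_edges_weight_def non_triangle_edges_def edge_weight_def
  by (rule arg_cong[where f = card]) auto

lemma graph_weight_eq:
  assumes "finite E"
  shows "graph_weight V E = 2 ^ num_edges_weight V E 2 * 3 ^ num_edges_weight V E 3"
proof -
  have "graph_weight V E = (\<Prod>e\<in>E. if in_triangle V E e then 2 else 3)"
    unfolding graph_weight_def edge_weight_def by simp
  also have "\<dots> = (\<Prod>e\<in>E \<inter> {e. in_triangle V E e}. 2) * (\<Prod>e\<in>E \<inter> - {e. in_triangle V E e}. 3)"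
    by (rule prod.If_cases[OF assms])
  also have "E \<inter> {e. in_triangle V E e} = {e\<in>E. edge_weight V E e = 2}"
    by (auto simp: edge_weight_def)
  also have "E \<inter> - {e. in_triangle V E e} = {e\<in>E. edge_weight V E e = 3}"
    by (auto simp: edge_weight_def)
  finally show ?thesis by (simp add: num_edges_weight_def)
qed

lemma card_edges_eq:
  assumes "finite E"
  shows "card E = num_edges_weight V E 2 + num_edges_weight V E 3"
proof -
  have "E = {e\<in>E. edge_weight V E e = 2} \<union> {e\<in>E. edge_weight V E e = 3}"
    by (auto simp: edge_weight_def)
  also have "card \<dots> = num_edges_weight V E 2 + num_edges_weight V E 3"
    unfolding num_edges_weight_def using assms by (intro card_Un_disjoint) auto
  finally show ?thesis .
qed

lemma graph_weight_le_pow: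
  "graph_weight V E \<le> 3 ^ card E"
proof -
  have "graph_weight V E \<le> (\<Prod>e\<in>E. 3)"
    unfolding graph_weight_def by (intro prod_mono) (simp add: edge_weight_def)
  then show ?thesis by simp
qed

lemma card_edges_plus_complement:
  assumes "simple_graph V E"
  shows "card E + card (complement_edges V E) = card V choose 2"
proof -
  have finV: "finite V" using assms unfolding simple_graph_def by simp
  have finC: "finite (complement_edges V E)"
    by (rule finite_subset[of _ "Pow V"]) (auto simp: complement_edges_def finV)
  have "E \<union> complement_edges V E = {B. B \<subseteq> V \<and> card B = 2}"
    using assms unfolding simple_graph_def complement_edges_def by auto
  moreover have "E \<inter> complement_edges V E = {}"
    unfolding complement_edges_def by auto
  ultimately show ?thesis
    using card_Un_disjoint[OF simple_graph_finite_edges[OF assms] finC] n_subsets[OF finV]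
    by simp
qed

lemma card_ordered_pairs:
  assumes "finite S" "\<forall>e\<in>S. card e = 2"
  shows "card {(x, y). x \<noteq> y \<and> {x, y} \<in> S} = 2 * card S"
proof -
  have two: "card {(x, y). x \<noteq> y \<and> {x, y} = e} = 2" if "e \<in> S" for e
  proof -
    have "card e = 2" using assms(2) that by blast
    then obtain u v where uv: "e = {u, v}" "u \<noteq> v" by (auto simp: card_2_iff)
    then have "{(x, y). x \<noteq> y \<and> {x, y} = e} = {(u, v), (v, u)}"
      by (auto simp: doubleton_eq_iff)
    then show ?thesis using uv by simp
  qed
  have "{(x, y). x \<noteq> y \<and> {x, y} \<in> S} = (\<Union>e\<in>S. {(x, y). x \<noteq> y \<and> {x, y} = e})"
    by auto
  also have "card \<dots> = (\<Sum>e\<in>S. card {(x, y). x \<noteq> y \<and> {x, y} = e})"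
  proof (rule card_UN_disjoint)
    show "\<forall>e\<in>S. finite {(x, y). x \<noteq> y \<and> {x, y} = e}"
    proof
      fix e assume "e \<in> S"
      then have "card {(x, y). x \<noteq> y \<and> {x, y} = e} = 2" by (rule two)
      then show "finite {(x, y). x \<noteq> y \<and> {x, y} = e}" by (intro card_ge_0_finite) simp
    qed
  qed (use assms(1) in auto)
  also have "\<dots> = 2 * card S" using two by simp
  finally show ?thesis .
qed

lemma card_Sigma_non_nbrs:
  assumes "finite V"
  shows "card (Sigma V (non_nbrs V E)) = 2 * card (complement_edges V E)"
proof -
  have "Sigma V (non_nbrs V E) = {(x, y). x \<noteq> y \<and> {x, y} \<in> complement_edges V E}"
    unfolding non_nbrs_def complement_edges_def by (auto simp: insert_commute)
  moreover have "finite (complement_edges V E)"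
    by (rule finite_subset[of _ "Pow V"]) (auto simp: complement_edges_def assms)
  moreover have "\<forall>e\<in>complement_edges V E. card e = 2"
    by (simp add: complement_edges_def)
  ultimately show ?thesis by (simp only: card_ordered_pairs)
qed

lemma card_Sigma_non_triangle_nbrs:
  assumes "simple_graph V E"
  shows "card (Sigma V (non_triangle_nbrs V E)) = 2 * card (non_triangle_edges V E)"
proof -
  have "Sigma V (non_triangle_nbrs V E) = {(x, y). x \<noteq> y \<and> {x, y} \<in> non_triangle_edges V E}"
    unfolding non_triangle_nbrs_def non_triangle_edges_def
    using simple_graph_edgeD[OF assms] by auto
  moreover have "finite (non_triangle_edges V E)"
    using simple_graph_finite_edges[OF assms] by (simp add: non_triangle_edges_def)
  moreover have "\<forall>e\<in>non_triangle_edges V E. card e = 2"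
    using assms by (auto simp: simple_graph_def non_triangle_edges_def)
  ultimately show ?thesis by (simp only: card_ordered_pairs)
qed

lemma sum_Sigma_ratio_le:
  fixes a :: "'a \<Rightarrow> real"
  assumes "finite V" "\<And>x. x \<in> V \<Longrightarrow> finite (R x)" "\<And>x. x \<in> V \<Longrightarrow> a x \<ge> 0"
    and sym: "\<And>x y. x \<in> V \<Longrightarrow> y \<in> R x \<Longrightarrow> y \<in> V \<and> x \<in> R y"
  shows "(\<Sum>(x, y)\<in>Sigma V R. a x / card (R x) + a y / card (R y)) \<le> 2 * (\<Sum>x\<in>V. a x)"
proof -
  define f where "f x = a x / card (R x)" for x
  have swap: "(\<Sum>(x, y)\<in>Sigma V R. f y) = (\<Sum>(x, y)\<in>Sigma V R. f x)"
    by (rule sum.reindex_bij_witness[of _ "\<lambda>(x, y). (y, x)" "\<lambda>(x, y). (y, x)"])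
       (auto dest: sym)
  have "(\<Sum>(x, y)\<in>Sigma V R. f x) = (\<Sum>x\<in>V. card (R x) * f x)"
    using assms(1,2) by (simp add: sum.Sigma[symmetric])
  also have "\<dots> \<le> (\<Sum>x\<in>V. a x)"
    using assms(3) by (intro sum_mono) (simp add: f_def)
  finally have "(\<Sum>(x, y)\<in>Sigma V R. f x) \<le> (\<Sum>x\<in>V. a x)" .
  moreover have "(\<Sum>(x, y)\<in>Sigma V R. f x + f y)
      = (\<Sum>(x, y)\<in>Sigma V R. f x) + (\<Sum>(x, y)\<in>Sigma V R. f y)"
    by (simp add: sum.distrib split_def)
  ultimately show ?thesis
    using swap unfolding f_def by linarith
qed

lemma card_nbrs_plus_non_nbrs:
  assumes "simple_graph V E" "x \<in> V"
  shows "card (nbrs V E x) + card (non_nbrs V E x) = card V - 1"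
proof -
  have finV: "finite V" using assms(1) unfolding simple_graph_def by simp
  have "nbrs V E x \<union> non_nbrs V E x = V - {x}"
    unfolding nbrs_def non_nbrs_def using simple_graph_edgeD[OF assms(1)] by auto
  moreover have "nbrs V E x \<inter> non_nbrs V E x = {}"
    unfolding nbrs_def non_nbrs_def by auto
  ultimately show ?thesis
    using finV assms(2) card_Un_disjoint[of "nbrs V E x" "non_nbrs V E x"]
    by (simp add: nbrs_def non_nbrs_def)
qed

lemma real_card_non_nbrs:
  assumes "simple_graph V E" "x \<in> V"
  shows "real (card (non_nbrs V E x)) = real (card V) - 1 - card (nbrs V E x)"
proof -
  have "card V \<ge> 1"
    using assms unfolding simple_graph_def by (auto simp: Suc_le_eq card_gt_0_iff)
  then have "card (nbrs V E x) + card (non_nbrs V E x) + 1 = card V"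
    using card_nbrs_plus_non_nbrs[OF assms] by linarith
  then have "real (card (nbrs V E x) + card (non_nbrs V E x) + 1) = real (card V)"
    by (simp only:)
  then show ?thesis unfolding of_nat_add of_nat_1 by linarith
qed

lemma non_triangle_edge_card_nbrs:
  assumes "simple_graph V E" "{x, y} \<in> non_triangle_edges V E"
  shows "card (nbrs V E x) + card (nbrs V E y) \<le> card V"
proof -
  have finV: "finite V" using assms(1) unfolding simple_graph_def by simp
  have "nbrs V E x \<inter> nbrs V E y = {}"
    using assms(2) unfolding nbrs_def non_triangle_edges_def in_triangle_def by blast
  then have "card (nbrs V E x) + card (nbrs V E y) = card (nbrs V E x \<union> nbrs V E y)"
    using finV by (intro card_Un_disjoint[symmetric]) (auto simp: nbrs_def)
  also have "\<dots> \<le> card V"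
    using finV by (intro card_mono) (auto simp: nbrs_def)
  finally show ?thesis .
qed

text \<open>Bounding each h by the corresponding d and then using 1/d1 + 1/d2 \<ge> 4/(d1 + d2).\<close>

lemma ratio_sum_lower_bound:
  fixes t d1 d2 h1 h2 :: real
  assumes "1 \<le> h1" "h1 \<le> d1" "1 \<le> h2" "h2 \<le> d2" "d1 + d2 \<le> t" "d1 \<le> t - 1" "d2 \<le> t - 1"
  shows "(t - 1 - d1) / h1 + (t - 1 - d2) / h2 \<ge> 2 - 4 / t"
proof -
  have t2: "t \<ge> 2" using assms by linarith
  have "(t - 1 - d1) / h1 \<ge> (t - 1 - d1) / d1" "(t - 1 - d2) / h2 \<ge> (t - 1 - d2) / d2"
    using assms by (auto intro: divide_left_mono)
  moreover have "(t - 1 - d1) / d1 = (t - 1) / d1 - 1" "(t - 1 - d2) / d2 = (t - 1) / d2 - 1"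
    using assms by (simp_all add: diff_divide_distrib)
  moreover have "1 / d1 + 1 / d2 \<ge> 4 / t"
  proof -
    have "4 * d1 * d2 \<le> (d1 + d2) * (d1 + d2)"
      using sum_squares_ge_zero[of "d1 - d2" 0] by (simp add: algebra_simps power2_eq_square)
    then have "1 / d1 + 1 / d2 \<ge> 4 / (d1 + d2)"
      using assms by (simp add: field_simps)
    moreover have "4 / (d1 + d2) \<ge> 4 / t"
      using assms by (intro divide_left_mono) auto
    ultimately show ?thesis by linarith
  qed
  then have "(t - 1) * (1 / d1 + 1 / d2) \<ge> (t - 1) * (4 / t)"
    using t2 by (intro mult_left_mono) auto
  moreover have "(t - 1) * (4 / t) = 4 - 4 / t"
    using t2 by (simp add: field_simps)
  ultimately show ?thesis by (simp add: algebra_simps)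
qed

lemma non_triangle_edge_charge:
  assumes "simple_graph V E" "{x, y} \<in> non_triangle_edges V E"
  shows "card (non_nbrs V E x) / card (non_triangle_nbrs V E x)
       + card (non_nbrs V E y) / card (non_triangle_nbrs V E y) \<ge> 2 - 4 / card V"
proof -
  have finV: "finite V" using assms(1) unfolding simple_graph_def by simp
  have "{x, y} \<in> E" using assms(2) by (simp add: non_triangle_edges_def)
  then have xy: "x \<in> V" "y \<in> V" "x \<noteq> y"
    using simple_graph_edgeD[OF assms(1)] by auto
  have "y \<in> non_triangle_nbrs V E x" "x \<in> non_triangle_nbrs V E y"
    using assms(2) xy by (auto simp: non_triangle_nbrs_def insert_commute)
  then have h: "card (non_triangle_nbrs V E x) \<ge> 1" "card (non_triangle_nbrs V E y) \<ge> 1"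
    using finV by (auto simp: Suc_le_eq card_gt_0_iff non_triangle_nbrs_def)
  have "non_triangle_nbrs V E z \<subseteq> nbrs V E z" for z
    by (auto simp: non_triangle_nbrs_def nbrs_def non_triangle_edges_def)
  then have hd: "card (non_triangle_nbrs V E z) \<le> card (nbrs V E z)" for z
    using finV by (intro card_mono) (auto simp: nbrs_def)
  have "real (card (nbrs V E x) + card (nbrs V E y)) \<le> real (card V)"
    using non_triangle_edge_card_nbrs[OF assms] by (simp only: of_nat_le_iff)
  then have "real (card (nbrs V E x)) + card (nbrs V E y) \<le> card V"
    unfolding of_nat_add .
  moreover have "real (card (nbrs V E z)) \<le> real (card V) - 1" if "z \<in> V" for z
    using real_card_non_nbrs[OF assms(1) that] by simp
  ultimately have "(real (card V) - 1 - card (nbrs V E x)) / card (non_triangle_nbrs V E x)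
      + (real (card V) - 1 - card (nbrs V E y)) / card (non_triangle_nbrs V E y) \<ge> 2 - 4 / card V"
    using h hd[of x] hd[of y] xy by (intro ratio_sum_lower_bound) simp_all
  then show ?thesis using real_card_non_nbrs[OF assms(1)] xy by simp
qed

lemma card_non_triangle_edges_bound:
  assumes "simple_graph V E"
  shows "real (card (non_triangle_edges V E)) * (1 - 2 / card V) \<le> card (complement_edges V E)"
proof -
  have finV: "finite V" using assms unfolding simple_graph_def by simp
  define R where "R = non_triangle_nbrs V E"
  define a where "a x = real (card (non_nbrs V E x))" for x
  have finR: "finite (R x)" for x using finV by (simp add: R_def non_triangle_nbrs_def)
  have "real (card (Sigma V R)) * (2 - 4 / card V) = (\<Sum>p\<in>Sigma V R. 2 - 4 / card V)"
    by simp
  also have "\<dots> \<le> (\<Sum>(x, y)\<in>Sigma V R. a x / card (R x) + a y / card (R y))"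
  proof (rule sum_mono)
    fix p assume "p \<in> Sigma V R"
    then obtain x y where "p = (x, y)" "{x, y} \<in> non_triangle_edges V E"
      by (auto simp: R_def non_triangle_nbrs_def)
    then show "2 - 4 / card V \<le> (\<lambda>(x, y). a x / card (R x) + a y / card (R y)) p"
      using non_triangle_edge_charge[OF assms] by (simp add: a_def R_def)
  qed
  also have "\<dots> \<le> 2 * (\<Sum>x\<in>V. a x)"
    using finV finR by (intro sum_Sigma_ratio_le)
      (auto simp: a_def R_def non_triangle_nbrs_def insert_commute)
  also have "(\<Sum>x\<in>V. a x) = real (card (Sigma V (non_nbrs V E)))"
    using finV by (simp add: a_def non_nbrs_def)
  finally have "real (2 * card (non_triangle_edges V E)) * (2 - 4 / card V)
      \<le> 2 * real (2 * card (complement_edges V E))"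
    unfolding R_def card_Sigma_non_triangle_nbrs[OF assms] card_Sigma_non_nbrs[OF finV] .
  moreover have "real (2 * card (non_triangle_edges V E)) * (2 - 4 / card V)
      = 4 * (real (card (non_triangle_edges V E)) * (1 - 2 / card V))"
    by (simp add: algebra_simps)
  moreover have "2 * real (2 * card (complement_edges V E)) = 4 * card (complement_edges V E)"
    by simp
  ultimately show ?thesis by linarith
qed

lemma num_edges_weight_3_le_complement:
  assumes "simple_graph V E" "card V \<ge> 40"
  shows "19 * num_edges_weight V E 3 \<le> 20 * card (complement_edges V E)"
proof -
  have "19 / 20 \<le> 1 - 2 / real (card V)"
    using assms(2) by (simp add: field_simps)
  then have "real (num_edges_weight V E 3) * (19 / 20) \<le> real (num_edges_weight V E 3) * (1 - 2 / card V)"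
    by (rule mult_left_mono) simp
  then show ?thesis
    using card_non_triangle_edges_bound[OF assms(1)] unfolding num_edges_weight_3 by linarith
qed

text \<open>This is where 0.16 comes from: (3/2)^20 \<le> 2^15 and 15/19 < 0.84.\<close>

lemma pow2_mult_pow3_le:
  fixes e2 e3 m :: nat
  assumes "19 * e3 \<le> 20 * m"
  shows "real (2 ^ e2 * 3 ^ e3) \<le> 2 powr real (e2 + e3 + m) * 2 powr (- 0.16 * real m)"
proof -
  have "ln ((3 / 2 :: real) ^ 20) \<le> ln (2 ^ 15)"
    by (subst ln_le_cancel_iff) (simp_all add: power_divide)
  then have "20 * ln (3 / 2 :: real) \<le> 15 * ln 2"
    by (subst (asm) (1 2) ln_realpow) simp_all
  then have "20 * (real m * ln (3 / 2)) \<le> 15 * (real m * ln 2)"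
    using mult_left_mono[of "20 * ln (3 / 2 :: real)" "15 * ln 2" "real m"] by (simp add: algebra_simps)
  moreover have "19 * (real e3 * ln (3 / 2)) \<le> 20 * (real m * ln (3 / 2))"
    using mult_right_mono[of "19 * real e3" "20 * real m" "ln (3 / 2)"] assms by (simp add: algebra_simps)
  moreover have "real m * ln 2 \<ge> 0" by simp
  ultimately have "real e3 * ln (3 / 2) \<le> 21 / 25 * (real m * ln 2)"
    by linarith
  then have key: "real e2 * ln 2 + real e3 * ln 3 \<le> (real (e2 + e3 + m) - 0.16 * real m) * ln 2"
    by (simp add: ln_div algebra_simps)
  have "real (2 ^ e2 * 3 ^ e3) = exp (real e2 * ln 2 + real e3 * ln 3)"
    by (simp add: exp_add powr_def flip: powr_realpow)
  also have "\<dots> \<le> exp ((real (e2 + e3 + m) - 0.16 * real m) * ln 2)"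
    using key by simp
  also have "\<dots> = 2 powr (real (e2 + e3 + m) - 0.16 * real m)"
    by (simp add: powr_def)
  also have "\<dots> = 2 powr real (e2 + e3 + m) * 2 powr (- 0.16 * real m)"
    by (simp add: powr_add[symmetric])
  finally show ?thesis .
qed

lemma two_mult_choose_two_le: "2 * (n choose 2) \<le> n ^ 2"
proof -
  have "2 * (n choose 2) \<le> n * (n - 1)" by (simp add: choose_two)
  also have "\<dots> \<le> n ^ 2" by (simp add: power2_eq_square)
  finally show ?thesis .
qed

theorem lemma4p3:
  fixes V :: "'a set" and E :: "'a set set"
  assumes "simple_graph V E"
    and "card V > 1000"
  defines "t \<equiv> card V"
    and "e2 \<equiv> num_edges_weight V E 2"
    and "e3 \<equiv> num_edges_weight V E 3"
    and "ebar \<equiv> card (complement_edges V E)"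
  shows "(real ebar \<le> real t ^ 2 / 4 \<longrightarrow>
            graph_weight V E = 2 ^ e2 * 3 ^ e3 \<and>
            real (graph_weight V E) \<le> 2 powr real (t choose 2) * 2 powr (- 0.16 * real ebar))
       \<and> (real ebar > real t ^ 2 / 4 \<longrightarrow>
            real (graph_weight V E) < 3 powr (real t ^ 2 / 4))"
proof -
  have finE: "finite E" using simple_graph_finite_edges[OF assms(1)] .
  have weight: "graph_weight V E = 2 ^ e2 * 3 ^ e3"
    unfolding e2_def e3_def using graph_weight_eq[OF finE] .
  have edges: "card E + ebar = t choose 2"
    unfolding t_def ebar_def using card_edges_plus_complement[OF assms(1)] .
  have "19 * e3 \<le> 20 * ebar"
    unfolding e3_def ebar_def using assms(1,2) by (intro num_edges_weight_3_le_complement) simp_all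
  then have "real (graph_weight V E) \<le> 2 powr real (t choose 2) * 2 powr (- 0.16 * real ebar)"
    using pow2_mult_pow3_le[of e3 ebar e2] edges card_edges_eq[OF finE]
    unfolding weight e2_def e3_def by simp
  moreover have "real (graph_weight V E) < 3 powr (real t ^ 2 / 4)" if "real ebar > real t ^ 2 / 4"
  proof -
    have "real (2 * (t choose 2)) \<le> real t ^ 2"
      using two_mult_choose_two_le[of t] unfolding of_nat_power[symmetric] of_nat_le_iff .
    then have "real (card E) < real t ^ 2 / 4"
      using that edges by (simp flip: of_nat_add)
    have "real (graph_weight V E) \<le> 3 powr real (card E)"
      using graph_weight_le_pow[of V E] by (simp add: powr_realpow flip: of_nat_le_iff)
    also have "\<dots> < 3 powr (real t ^ 2 / 4)"
      using \<open>real (card E) < real t ^ 2 / 4\<close> by (intro powr_less_mono) simp_all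
    finally show ?thesis .
  qed
  ultimately show ?thesis using weight by blast
qed

end
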